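(* Let $n\in\mathbb{N}$ with $n\geq2$. There exist a switched linear system $\{A_i\}_{i=1}^m\subseteq\mathbb{R}^{n\times n}$ and a cost function $c:\mathbb{R}^n\to\mathbb{R}_{\geq0}$ such that $\mathrm{JSR}(\{A_i\}_{i=1}^m)<1$, $c$ is $C^\infty$ on $\mathbb{R}^n$ and Lipschitz continuous on a neighborhood of the origin, and the associated optimal value function $J^\star$ and worst-case value function $J^\circ$ are each non-differentiable on a dense subset of $\mathbb{R}^n$. Furthermore, the matrices $A_i$ can be chosen to have rational entries.
   Context: A discrete-time switched linear system $\{A_i\}_{i=1}^m$ is $\xi(t+1)=A_{\sigma(t)}\xi(t)$, $t\in\mathbb{N}$, with switching signal $\sigma:\mathbb{N}\to\{1,\ldots,m\}$; $\xi(t,x,\sigma)$ denotes the solution at time $t$ with $\xi(0)=x$. The joint spectral radius $\mathrm{JSR}(\{A_i\})$ is the infimum of $r\geq0$ such that there is $C\geq0$ with $\lVert\xi(t)\rVert\leq Cr^t\lVert\xi(0)\rVert$ for all solutions and all $t$. Given a cost $c:\mathbb{R}^n\to\mathbb{R}_{\geq0}$, $J(x,\sigma)=\sum_{t=0}^\infty c(\xi(t,x,\sigma))$, $J^\star(x)=\inf_\sigma J(x,\sigma)$ (optimal value function) and $J^\circ(x)=\sup_\sigma J(x,\sigma)$ (worst-case value function). *)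

theory Defs
  imports "HOL-Analysis.Analysis" "HOL-Library.Extended_Nonnegative_Real"
begin

text \<open>A switched linear system with m modes is given by A :: nat => matrix,
  modes indexed 1..m. A switching signal is sigma :: nat => nat with values in 1..m.\<close>

definition switching_signal :: "nat \<Rightarrow> (nat \<Rightarrow> nat) \<Rightarrow> bool" where
  "switching_signal m \<sigma> \<longleftrightarrow> (\<forall>t. \<sigma> t \<in> {1..m})"

fun sol :: "(nat \<Rightarrow> real^'n^'n) \<Rightarrow> (nat \<Rightarrow> nat) \<Rightarrow> real^'n \<Rightarrow> nat \<Rightarrow> real^'n" where
  "sol A \<sigma> x 0 = x"
| "sol A \<sigma> x (Suc t) = A (\<sigma> t) *v sol A \<sigma> x t"

definition JSR :: "nat \<Rightarrow> (nat \<Rightarrow> real^'n^'n) \<Rightarrow> real" where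
  "JSR m A = Inf {r. r \<ge> 0 \<and> (\<exists>C\<ge>0. \<forall>\<sigma> x t. switching_signal m \<sigma> \<longrightarrow>
       norm (sol A \<sigma> x t) \<le> C * r ^ t * norm x)}"

definition cost :: "(nat \<Rightarrow> real^'n^'n) \<Rightarrow> (real^'n \<Rightarrow> real) \<Rightarrow> real^'n \<Rightarrow> (nat \<Rightarrow> nat) \<Rightarrow> ennreal" where
  "cost A c x \<sigma> = (\<Sum>t. ennreal (c (sol A \<sigma> x t)))"

definition Jopt :: "nat \<Rightarrow> (nat \<Rightarrow> real^'n^'n) \<Rightarrow> (real^'n \<Rightarrow> real) \<Rightarrow> real^'n \<Rightarrow> ennreal" where
  "Jopt m A c x = (INF \<sigma>\<in>{\<sigma>. switching_signal m \<sigma>}. cost A c x \<sigma>)"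

definition Jworst :: "nat \<Rightarrow> (nat \<Rightarrow> real^'n^'n) \<Rightarrow> (real^'n \<Rightarrow> real) \<Rightarrow> real^'n \<Rightarrow> ennreal" where
  "Jworst m A c x = (SUP \<sigma>\<in>{\<sigma>. switching_signal m \<sigma>}. cost A c x \<sigma>)"

text \<open>C-infinity: f is infinitely (Frechet) differentiable; D is gives the iterated
  partial derivative along the index list is, and each D is is differentiable with
  derivative v |-> sum_i v_i * D (i#is).\<close>
definition smooth_fun :: "(real^'n \<Rightarrow> real) \<Rightarrow> bool" where
  "smooth_fun f \<longleftrightarrow> (\<exists>D. D [] = f \<and>
     (\<forall>is x. (D is has_derivative (\<lambda>v. \<Sum>i\<in>UNIV. v $ i * D (i # is) x)) (at x)))"

end

theory Submission
  imports Defs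
begin

text \<open>
  Identify the coordinate plane spanned by two basis vectors \<open>a \<noteq> b\<close> with \<open>\<complex>\<close> via
  \<open>z = x\<^sub>a + i x\<^sub>b\<close>. The two modes act as \<open>\<plusminus>\<close> multiplication by \<open>\<lambda> = (3 + 4i)/10\<close> on that
  plane (and as zero elsewhere), so the trajectories are \<open>s\<^sub>t \<lambda>\<^sup>t z\<close> for arbitrary signs \<open>s\<^sub>t\<close> with
  \<open>s\<^sub>0 = 1\<close>. The cost \<open>(x\<^sub>a + x\<^sub>b\<^sup>2)\<^sup>2\<close> of \<open>s y\<close> is \<open>e y + s o y\<close>, where \<open>e y = (Re y)\<^sup>2 + (Im y)\<^sup>4\<close>
  dominates \<open>\<bar>o y\<bar>\<close> for \<open>o y = 2 Re y (Im y)\<^sup>2\<close>. Choosing the signs termwise gives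
  \<open>J\<^sup>\<circ> = E + H\<close> and \<open>J\<^sup>\<star> = E - H\<close> with \<open>E z = \<Sum>\<^bsub>t\<^esub> e (\<lambda>\<^sup>t z) + o z\<close> and
  \<open>H z = \<Sum>\<^bsub>t \<ge> 1\<^esub> \<bar>o (\<lambda>\<^sup>t z)\<bar>\<close>. The second differences of \<open>E\<close> are \<open>O(h\<^sup>2)\<close>, but \<open>\<bar>o\<bar>\<close> has a kink on
  the imaginary axis: if \<open>\<lambda>\<^sup>k z\<close> is a nonzero imaginary number for some \<open>k \<ge> 1\<close>, the second
  differences of \<open>H\<close> at \<open>z\<close> along \<open>conj (\<lambda>\<^sup>k)\<close> are at least of order \<open>\<bar>h\<bar>\<close>, so neither \<open>E + H\<close> nor
  \<open>E - H\<close> is differentiable there. As \<open>((3 + 4i)/5)\<^sup>n \<noteq> 1\<close> for \<open>n \<ge> 1\<close>, the argument of \<open>\<lambda>\<close> is an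
  irrational multiple of \<open>\<pi>\<close>, and Kronecker's theorem makes these points \<open>z\<close> dense.
\<close>

section \<open>The switched system on a coordinate plane\<close>

definition to_plane :: "'n \<Rightarrow> 'n \<Rightarrow> real^'n \<Rightarrow> complex" where
  "to_plane a b x = Complex (x $ a) (x $ b)"

definition from_plane :: "'n \<Rightarrow> 'n \<Rightarrow> complex \<Rightarrow> real^'n" where
  "from_plane a b z = (\<chi> i. if i = a then Re z else if i = b then Im z else 0)"

lemma to_plane_from_plane: "a \<noteq> b \<Longrightarrow> to_plane a b (from_plane a b z) = z"
  by (simp add: to_plane_def from_plane_def complex_eq_iff)

lemma to_plane_add: "to_plane a b (x + y) = to_plane a b x + to_plane a b y"
  and to_plane_diff: "to_plane a b (x - y) = to_plane a b x - to_plane a b y"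
  and to_plane_scaleR: "to_plane a b (h *\<^sub>R x) = h *\<^sub>R to_plane a b x"
  by (simp_all add: to_plane_def complex_eq_iff)

lemma from_plane_scaleR: "from_plane a b (c *\<^sub>R z) = c *\<^sub>R from_plane a b z"
  by (simp add: from_plane_def vec_eq_iff)

lemma power2_norm_vec_eq_sum:
  fixes x :: "real^'n"
  shows "(norm x)\<^sup>2 = (\<Sum>j\<in>UNIV. (x $ j)\<^sup>2)"
  by (simp add: norm_vec_def L2_set_def sum_nonneg)

lemma norm_from_plane:
  assumes "a \<noteq> b" shows "norm (from_plane a b z) = cmod z"
proof -
  have "(norm (from_plane a b z))\<^sup>2 = (\<Sum>j\<in>{a, b}. (from_plane a b z $ j)\<^sup>2)"
    unfolding power2_norm_vec_eq_sum
    by (rule sum.mono_neutral_right) (auto simp: from_plane_def)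
  also have "\<dots> = (cmod z)\<^sup>2"
    using assms by (simp add: from_plane_def cmod_power2)
  finally show ?thesis by (simp add: power2_eq_iff_nonneg)
qed

lemma norm_to_plane_le:
  assumes "a \<noteq> b" shows "cmod (to_plane a b x) \<le> norm x"
proof -
  have "(cmod (to_plane a b x))\<^sup>2 = (\<Sum>j\<in>{a, b}. (x $ j)\<^sup>2)"
    using assms by (simp add: to_plane_def cmod_power2)
  also have "\<dots> \<le> (norm x)\<^sup>2"
    unfolding power2_norm_vec_eq_sum by (rule sum_mono2) auto
  finally show ?thesis by (simp add: power2_le_iff_abs_le)
qed

definition spiral :: complex where
  "spiral = Complex (3/10) (2/5)"

lemma cmod_spiral: "cmod spiral = 1/2"
  by (simp add: spiral_def cmod_def power2_eq_square real_sqrt_divide)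

lemma spiral_neq_0 [simp]: "spiral \<noteq> 0"
  by (simp add: spiral_def complex_eq_iff)

definition spiral_mat :: "'n \<Rightarrow> 'n \<Rightarrow> real^'n^'n" where
  "spiral_mat a b = (\<chi> i j.
     if i = a then (if j = a then 3/10 else if j = b then -2/5 else 0)
     else if i = b then (if j = a then 2/5 else if j = b then 3/10 else 0) else 0)"

lemma spiral_mat_mult:
  fixes a b :: "'n::finite"
  assumes "a \<noteq> b"
  shows "spiral_mat a b *v x = from_plane a b (spiral * to_plane a b x)"
proof -
  have row: "(\<Sum>j\<in>UNIV. (if j = a then p else if j = b then q else 0) * x $ j) = p * x $ a + q * x $ b"
    for p q :: real
  proof -
    have "(\<Sum>j\<in>UNIV. (if j = a then p else if j = b then q else 0) * x $ j)
        = (\<Sum>j\<in>{a, b}. (if j = a then p else if j = b then q else 0) * x $ j)"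
      by (rule sum.mono_neutral_right) auto
    then show ?thesis using assms by simp
  qed
  show ?thesis
    using assms
    by (simp add: vec_eq_iff matrix_vector_mult_def spiral_mat_def from_plane_def to_plane_def
        spiral_def row)
qed

definition mode_sign :: "nat \<Rightarrow> real" where
  "mode_sign k = (if k = 1 then 1 else -1)"

definition modes :: "'n \<Rightarrow> 'n \<Rightarrow> nat \<Rightarrow> real^'n^'n" where
  "modes a b k = mode_sign k *\<^sub>R spiral_mat a b"

definition signs :: "(nat \<Rightarrow> nat) \<Rightarrow> nat \<Rightarrow> real" where
  "signs \<sigma> t = (\<Prod>j<t. mode_sign (\<sigma> j))"

lemma signs_0 [simp]: "signs \<sigma> 0 = 1"
  by (simp add: signs_def)

lemma signs_Suc: "signs \<sigma> (Suc t) = mode_sign (\<sigma> t) * signs \<sigma> t"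
  by (simp add: signs_def)

lemma abs_signs [simp]: "\<bar>signs \<sigma> t\<bar> = 1"
  by (induction t) (simp_all add: signs_Suc abs_mult mode_sign_def)

lemma modes_rational: "modes a b k $ i $ j \<in> \<rat>"
  by (simp add: modes_def spiral_mat_def mode_sign_def)

lemma modes_mult:
  fixes a b :: "'n::finite"
  assumes "a \<noteq> b"
  shows "modes a b k *v x = from_plane a b (mode_sign k *\<^sub>R (spiral * to_plane a b x))"
proof -
  have "modes a b k *v x = mode_sign k *\<^sub>R (spiral_mat a b *v x)"
    by (simp add: modes_def vec_eq_iff matrix_vector_mult_def sum_distrib_left mult.assoc)
  then show ?thesis by (simp add: spiral_mat_mult[OF assms] from_plane_scaleR)
qed

lemma to_plane_sol_modes:
  fixes a b :: "'n::finite"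
  assumes "a \<noteq> b"
  shows "to_plane a b (sol (modes a b) \<sigma> x t) = signs \<sigma> t *\<^sub>R (spiral ^ t * to_plane a b x)"
proof (induction t)
  case (Suc t)
  then show ?case
    by (simp add: modes_mult[OF assms] to_plane_from_plane[OF assms] signs_Suc)
qed simp

lemma sol_modes_Suc:
  fixes a b :: "'n::finite"
  assumes "a \<noteq> b"
  shows "sol (modes a b) \<sigma> x (Suc t) = from_plane a b (signs \<sigma> (Suc t) *\<^sub>R (spiral ^ Suc t * to_plane a b x))"
  by (simp add: modes_mult[OF assms] to_plane_sol_modes[OF assms] signs_Suc mult.assoc)

lemma norm_sol_modes_le:
  fixes a b :: "'n::finite"
  assumes "a \<noteq> b"
  shows "norm (sol (modes a b) \<sigma> x t) \<le> (1/2) ^ t * norm x"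
proof (cases t)
  case (Suc s)
  have "norm (sol (modes a b) \<sigma> x t) = cmod (spiral ^ t * to_plane a b x)"
    unfolding Suc sol_modes_Suc[OF assms]
    by (simp add: norm_from_plane[OF assms])
  also have "\<dots> \<le> (1/2) ^ t * norm x"
    by (simp add: norm_mult norm_power cmod_spiral mult_left_mono norm_to_plane_le[OF assms])
  finally show ?thesis .
qed simp

lemma JSR_modes_less_1:
  fixes a b :: "'n::finite"
  assumes "a \<noteq> b"
  shows "JSR 2 (modes a b) < 1"
proof -
  have "1/2 \<in> {r. r \<ge> 0 \<and> (\<exists>C\<ge>0. \<forall>\<sigma> x t. switching_signal 2 \<sigma> \<longrightarrow>
       norm (sol (modes a b) \<sigma> x t) \<le> C * r ^ t * norm x)}"
    using norm_sol_modes_le[OF assms] by (auto intro!: exI[of _ 1])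
  then have "JSR 2 (modes a b) \<le> 1/2"
    unfolding JSR_def by (rule cInf_lower) (auto intro: bdd_belowI[of _ 0])
  then show ?thesis by simp
qed

section \<open>The cost function\<close>

definition plane_cost :: "'n \<Rightarrow> 'n \<Rightarrow> real^'n \<Rightarrow> real" where
  "plane_cost a b x = (x $ a + (x $ b)\<^sup>2)\<^sup>2"

definition cost_even :: "complex \<Rightarrow> real" where
  "cost_even z = (Re z)\<^sup>2 + (Im z) ^ 4"

definition cost_odd :: "complex \<Rightarrow> real" where
  "cost_odd z = 2 * Re z * (Im z)\<^sup>2"

lemma plane_cost_signed:
  assumes "\<bar>s\<bar> = 1" and "to_plane a b x = s *\<^sub>R z"
  shows "plane_cost a b x = cost_even z + s * cost_odd z"
proof -
  have "s = 1 \<or> s = -1"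
    using assms(1) by auto
  then show ?thesis
    using assms(2)
    by (auto simp: plane_cost_def to_plane_def complex_eq_iff cost_even_def cost_odd_def
        power2_eq_square power4_eq_xxxx algebra_simps)
qed

lemma abs_cost_odd_le: "\<bar>cost_odd z\<bar> \<le> cost_even z"
proof -
  have "2 * \<bar>Re z\<bar> * (Im z)\<^sup>2 \<le> (Re z)\<^sup>2 + ((Im z)\<^sup>2)\<^sup>2"
    using sum_squares_bound[of "\<bar>Re z\<bar>" "(Im z)\<^sup>2"] by simp
  then show ?thesis
    by (simp add: cost_odd_def cost_even_def abs_mult flip: power_mult)
qed

lemma cost_even_le: "cost_even z \<le> (cmod z)\<^sup>2 + (cmod z) ^ 4"
proof -
  have "(Re z)\<^sup>2 \<le> (cmod z)\<^sup>2"
    by (simp add: abs_Re_le_cmod power2_le_iff_abs_le)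
  moreover have "(Im z) ^ 4 \<le> (cmod z) ^ 4"
    using power_mono[OF abs_Im_le_cmod abs_ge_zero, of z 4] by (simp add: power_even_abs)
  ultimately show ?thesis by (simp add: cost_even_def)
qed

lemma cmod_spiral_power_mult: "cmod (spiral ^ t * z) = (1/2) ^ t * cmod z"
  by (simp add: norm_mult norm_power cmod_spiral)

lemma cmod_spiral_orbit_le: "cmod (spiral ^ t * z) \<le> cmod z"
  by (simp add: cmod_spiral_power_mult mult_left_le_one_le power_le_one)

lemma cmod_spiral_orbit_power_le:
  "cmod (spiral ^ t * z) ^ Suc n \<le> cmod z ^ Suc n * (1/2) ^ t"
proof -
  have "((1/2::real) ^ t) ^ n \<le> 1"
    by (simp add: power_le_one)
  then have "((1/2::real) ^ t) ^ Suc n \<le> (1/2) ^ t"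
    by (simp add: mult_left_le)
  then have "((1/2::real) ^ t) ^ Suc n * cmod z ^ Suc n \<le> (1/2) ^ t * cmod z ^ Suc n"
    by (rule mult_right_mono) simp
  then show ?thesis
    unfolding cmod_spiral_power_mult power_mult_distrib by (simp add: ac_simps)
qed

lemma summable_cost_even_orbit: "summable (\<lambda>t. cost_even (spiral ^ t * z))"
proof (rule summable_comparison_test)
  show "summable (\<lambda>t. ((cmod z)\<^sup>2 + cmod z ^ 4) * (1/2) ^ t)"
    by (intro summable_mult summable_geometric) simp
  have "cost_even (spiral ^ t * z) \<le> ((cmod z)\<^sup>2 + cmod z ^ 4) * (1/2) ^ t" for t
    using cost_even_le[of "spiral ^ t * z"] cmod_spiral_orbit_power_le[of t z 1]
      cmod_spiral_orbit_power_le[of t z 3]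
    by (simp add: algebra_simps numeral_eq_Suc)
  moreover have "0 \<le> cost_even y" for y
    by (simp add: cost_even_def)
  ultimately show "\<exists>N. \<forall>t\<ge>N. norm (cost_even (spiral ^ t * z)) \<le> ((cmod z)\<^sup>2 + cmod z ^ 4) * (1/2) ^ t"
    by simp
qed

lemma summable_abs_cost_odd_orbit: "summable (\<lambda>t. \<bar>cost_odd (spiral ^ Suc t * z)\<bar>)"
  by (rule summable_comparison_test[OF _ summable_cost_even_orbit[of "spiral * z"]])
    (simp add: abs_cost_odd_le power_Suc2 mult.assoc del: power_Suc)

lemma cost_modes:
  fixes a b :: "'n::finite"
  assumes "a \<noteq> b"
  shows "cost (modes a b) (plane_cost a b) x \<sigma>
       = (\<Sum>t. ennreal (cost_even (spiral ^ t * to_plane a b x)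
                        + signs \<sigma> t * cost_odd (spiral ^ t * to_plane a b x)))"
proof -
  have "plane_cost a b (sol (modes a b) \<sigma> x t)
      = cost_even (spiral ^ t * to_plane a b x) + signs \<sigma> t * cost_odd (spiral ^ t * to_plane a b x)" for t
    by (rule plane_cost_signed) (simp_all add: to_plane_sol_modes[OF assms])
  then show ?thesis
    by (simp add: cost_def)
qed

fun pow_deriv :: "nat \<Rightarrow> nat \<Rightarrow> real \<Rightarrow> real" where
  "pow_deriv \<alpha> 0 u = u ^ \<alpha>"
| "pow_deriv \<alpha> (Suc i) u = real \<alpha> * pow_deriv (\<alpha> - 1) i u"

lemma has_real_derivative_pow_deriv:
  "(pow_deriv \<alpha> i has_real_derivative pow_deriv \<alpha> (Suc i) u) (at u)"
proof (induction i arbitrary: \<alpha>)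
  case 0
  show ?case
    using DERIV_pow[of \<alpha> u] by (simp add: fun_eq_iff mult.commute)
next
  case (Suc i)
  have "pow_deriv \<alpha> (Suc i) = (\<lambda>u. real \<alpha> * pow_deriv (\<alpha> - 1) i u)"
    by (simp add: fun_eq_iff)
  then show ?case
    using DERIV_cmult[OF Suc.IH[of "\<alpha> - 1"], of "real \<alpha>"] by simp
qed

lemma has_derivative_pow_deriv_coord:
  "((\<lambda>x::real^'n. pow_deriv \<alpha> i (x $ a)) has_derivative (\<lambda>v. v $ a * pow_deriv \<alpha> (Suc i) (x $ a))) (at x)"
proof -
  have "((\<lambda>x::real^'n. x $ a) has_derivative (\<lambda>v. v $ a)) (at x)"
    by (rule bounded_linear_imp_has_derivative[OF bounded_linear_vec_nth])
  from has_derivative_compose[OF this has_real_derivative_pow_deriv[unfolded has_field_derivative_def]]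
  show ?thesis
    by (simp add: mult.commute)
qed

lemma has_derivative_pow_deriv_monomial:
  "((\<lambda>x::real^'n. pow_deriv \<alpha> i (x $ a) * pow_deriv \<beta> j (x $ b)) has_derivative
     (\<lambda>v. v $ a * (pow_deriv \<alpha> (Suc i) (x $ a) * pow_deriv \<beta> j (x $ b))
        + v $ b * (pow_deriv \<alpha> i (x $ a) * pow_deriv \<beta> (Suc j) (x $ b)))) (at x)"
  using has_derivative_mult[OF has_derivative_pow_deriv_coord has_derivative_pow_deriv_coord]
  by (simp add: algebra_simps)

lemma smooth_fun_two_coords:
  fixes P :: "nat \<Rightarrow> nat \<Rightarrow> real \<Rightarrow> real \<Rightarrow> real" and a b :: "'n::finite"
  assumes "a \<noteq> b"
    and P: "\<And>i j x. ((\<lambda>x. P i j (x $ a) (x $ b)) has_derivative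
              (\<lambda>v. v $ a * P (Suc i) j (x $ a) (x $ b) + v $ b * P i (Suc j) (x $ a) (x $ b))) (at x)"
  shows "smooth_fun (\<lambda>x. P 0 0 (x $ a) (x $ b))"
proof -
  define D where "D is x = (if set is \<subseteq> {a, b} then P (count_list is a) (count_list is b) (x $ a) (x $ b) else 0)"
    for "is" and x :: "real^'n"
  have "(D is has_derivative (\<lambda>v. \<Sum>i\<in>UNIV. v $ i * D (i # is) x)) (at x)" for "is" x
  proof (cases "set is \<subseteq> {a, b}")
    case True
    have "(\<Sum>i\<in>UNIV. v $ i * D (i # is) x) = (\<Sum>i\<in>{a, b}. v $ i * D (i # is) x)" for v
      by (rule sum.mono_neutral_right) (auto simp: D_def)
    then have "(\<lambda>v. \<Sum>i\<in>UNIV. v $ i * D (i # is) x)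
        = (\<lambda>v. v $ a * P (Suc (count_list is a)) (count_list is b) (x $ a) (x $ b)
             + v $ b * P (count_list is a) (Suc (count_list is b)) (x $ a) (x $ b))"
      using True assms(1) by (simp add: D_def)
    moreover have "D is = (\<lambda>x. P (count_list is a) (count_list is b) (x $ a) (x $ b))"
      using True by (simp add: D_def fun_eq_iff)
    ultimately show ?thesis
      using P by simp
  next
    case False
    then have "D is = (\<lambda>x. 0)" and "\<And>i. D (i # is) = (\<lambda>x. 0)"
      by (auto simp: D_def fun_eq_iff)
    then show ?thesis
      by simp
  qed
  moreover have "D [] = (\<lambda>x. P 0 0 (x $ a) (x $ b))"
    by (simp add: D_def fun_eq_iff)
  ultimately show ?thesis
    unfolding smooth_fun_def by blast
qed

lemma smooth_plane_cost:
  fixes a b :: "'n::finite"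
  assumes "a \<noteq> b"
  shows "smooth_fun (plane_cost a b)"
proof -
  define P where "P i j u v = pow_deriv 2 i u * pow_deriv 0 j v + 2 * (pow_deriv 1 i u * pow_deriv 2 j v)
      + pow_deriv 0 i u * pow_deriv 4 j v" for i j u v
  have "((\<lambda>x. P i j (x $ a) (x $ b)) has_derivative
      (\<lambda>v. v $ a * P (Suc i) j (x $ a) (x $ b) + v $ b * P i (Suc j) (x $ a) (x $ b))) (at x)" for i j x
  proof -
    let ?M = "\<lambda>\<alpha> \<beta> v. v $ a * (pow_deriv \<alpha> (Suc i) (x $ a) * pow_deriv \<beta> j (x $ b))
        + v $ b * (pow_deriv \<alpha> i (x $ a) * pow_deriv \<beta> (Suc j) (x $ b))"
    have "((\<lambda>x. P i j (x $ a) (x $ b)) has_derivative (\<lambda>v. ?M 2 0 v + 2 * ?M 1 2 v + ?M 0 4 v)) (at x)"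
      unfolding P_def by (intro has_derivative_add has_derivative_mult_right has_derivative_pow_deriv_monomial)
    then show ?thesis
      by (simp add: P_def algebra_simps)
  qed
  moreover have "plane_cost a b = (\<lambda>x. P 0 0 (x $ a) (x $ b))"
    by (simp add: fun_eq_iff plane_cost_def P_def power2_eq_square power4_eq_xxxx algebra_simps)
  ultimately show ?thesis
    using smooth_fun_two_coords[OF assms] by simp
qed

lemma lipschitz_plane_cost:
  fixes a b :: "'n::finite"
  shows "12-lipschitz_on (ball 0 1) (plane_cost a b)"
proof (rule lipschitz_onI)
  fix x y :: "real^'n"
  assume "x \<in> ball 0 1" and "y \<in> ball 0 1"
  then have small: "\<bar>x $ i\<bar> \<le> 1" "\<bar>y $ i\<bar> \<le> 1" for i
    using component_le_norm_cart[of x i] component_le_norm_cart[of y i] by auto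
  have close: "\<bar>x $ i - y $ i\<bar> \<le> dist x y" for i
    using component_le_norm_cart[of "x - y" i] by (simp add: dist_norm)
  define p where "p = x $ a + (x $ b)\<^sup>2"
  define q where "q = y $ a + (y $ b)\<^sup>2"
  have "(x $ b)\<^sup>2 \<le> 1" "(y $ b)\<^sup>2 \<le> 1"
    using small[of b] by (simp_all add: abs_square_le_1)
  then have "\<bar>p + q\<bar> \<le> 4"
    using small[of a] zero_le_power2[of "x $ b"] zero_le_power2[of "y $ b"]
    unfolding p_def q_def by arith
  moreover have "\<bar>p - q\<bar> \<le> 3 * dist x y"
  proof -
    have "p - q = (x $ a - y $ a) + (x $ b - y $ b) * (x $ b + y $ b)"
      by (simp add: p_def q_def power2_eq_square algebra_simps)
    moreover have "\<bar>(x $ b - y $ b) * (x $ b + y $ b)\<bar> \<le> dist x y * 2"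
      unfolding abs_mult using close[of b] small[of b]
      by (intro mult_mono) (auto intro: abs_triangle_ineq[THEN order_trans])
    ultimately show ?thesis
      using close[of a] by (simp add: abs_triangle_ineq[THEN order_trans])
  qed
  ultimately have "\<bar>p - q\<bar> * \<bar>p + q\<bar> \<le> 3 * dist x y * 4"
    by (intro mult_mono) simp_all
  moreover have "plane_cost a b x - plane_cost a b y = (p - q) * (p + q)"
    by (simp add: plane_cost_def p_def q_def power2_eq_square algebra_simps)
  ultimately show "dist (plane_cost a b x) (plane_cost a b y) \<le> 12 * dist x y"
    by (simp add: dist_real_def abs_mult)
qed simp

section \<open>Optimal and worst-case value functions\<close>

lemma signs_realizable:
  fixes d :: "nat \<Rightarrow> real"
  assumes "d 0 = 1" and "\<And>t. \<bar>d t\<bar> = 1"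
  obtains \<sigma> where "switching_signal 2 \<sigma>" and "signs \<sigma> = d"
proof
  define \<sigma> where "\<sigma> t = (if d (Suc t) = d t then 1 else 2::nat)" for t
  show "switching_signal 2 \<sigma>"
    by (simp add: switching_signal_def \<sigma>_def)
  have "signs \<sigma> t = d t" for t
  proof (induction t)
    case (Suc t)
    have "\<bar>d t\<bar> = 1" "\<bar>d (Suc t)\<bar> = 1"
      using assms(2) by blast+
    with Suc show ?case
      by (auto simp: signs_Suc \<sigma>_def mode_sign_def abs_if split: if_splits)
  qed (simp add: assms(1))
  then show "signs \<sigma> = d" ..
qed

lemma signed_series:
  fixes e f s :: "nat \<Rightarrow> real"
  assumes "summable e" and "\<And>t. \<bar>f t\<bar> \<le> e t" and "s 0 = 1" and "\<And>t. \<bar>s t\<bar> = 1"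
  shows "(\<Sum>t. ennreal (e t + s t * f t)) = ennreal ((\<Sum>t. e t) + f 0 + (\<Sum>t. s (Suc t) * f (Suc t)))"
proof -
  have abs_sf: "\<bar>s t * f t\<bar> = \<bar>f t\<bar>" for t
    by (simp add: abs_mult assms(4))
  have "summable (\<lambda>t. s t * f t)"
    by (rule summable_comparison_test[OF _ assms(1)]) (use abs_sf assms(2) in simp)
  then have "(\<Sum>t. e t + s t * f t) = (\<Sum>t. e t) + f 0 + (\<Sum>t. s (Suc t) * f (Suc t))"
    using assms(1,3) by (simp add: suminf_add[symmetric] suminf_split_head[of "\<lambda>t. s t * f t"])
  moreover have "summable (\<lambda>t. e t + s t * f t)"
    using assms(1) \<open>summable (\<lambda>t. s t * f t)\<close> by (rule summable_add)
  moreover have "0 \<le> e t + s t * f t" for t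
    using abs_sf[of t] assms(2)[of t] by linarith
  ultimately show ?thesis
    by (simp add: suminf_ennreal2)
qed

lemma signed_tail_attained:
  fixes f :: "nat \<Rightarrow> real"
  assumes "summable (\<lambda>t. \<bar>f (Suc t)\<bar>)" and "\<epsilon> = 1 \<or> \<epsilon> = -1"
  obtains \<sigma> where "switching_signal 2 \<sigma>"
    and "(\<Sum>t. signs \<sigma> (Suc t) * f (Suc t)) = \<epsilon> * (\<Sum>t. \<bar>f (Suc t)\<bar>)"
proof -
  define d where "d t = (if t = 0 then 1 else if 0 \<le> \<epsilon> * f t then 1 else -1::real)" for t
  have "\<bar>d t\<bar> = 1" for t
    using assms(2) by (auto simp: d_def)
  then obtain \<sigma> where "switching_signal 2 \<sigma>" and "signs \<sigma> = d"
    using signs_realizable[of d] by (auto simp: d_def)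
  moreover have "d (Suc t) * f (Suc t) = \<epsilon> * \<bar>f (Suc t)\<bar>" for t
    using assms(2) by (auto simp: d_def abs_if)
  ultimately show ?thesis
    using that assms(1) by (simp add: suminf_mult)
qed

lemma suminf_abs_tail_le:
  fixes e f :: "nat \<Rightarrow> real"
  assumes "summable e" and "\<And>t. \<bar>f t\<bar> \<le> e t"
  shows "(\<Sum>t. \<bar>f (Suc t)\<bar>) \<le> (\<Sum>t. e t) + f 0"
proof -
  have summable_e: "summable (\<lambda>t. e (Suc t))"
    using assms(1) by (rule summable_Suc_iff[THEN iffD2])
  have "summable (\<lambda>t. \<bar>f (Suc t)\<bar>)"
    by (rule summable_comparison_test[OF _ summable_e]) (simp add: assms(2))
  then have "(\<Sum>t. \<bar>f (Suc t)\<bar>) \<le> (\<Sum>t. e (Suc t))"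
    using summable_e by (rule suminf_le[OF assms(2)])
  moreover have "(\<Sum>t. e t) = e 0 + (\<Sum>t. e (Suc t))"
    using suminf_split_head[OF assms(1)] by simp
  moreover have "\<bar>f 0\<bar> \<le> e 0"
    by (rule assms(2))
  ultimately show ?thesis
    by linarith
qed

lemma signed_series_extremes:
  fixes e f :: "nat \<Rightarrow> real"
  assumes "summable e" and "\<And>t. \<bar>f t\<bar> \<le> e t"
  defines "V \<equiv> \<lambda>\<sigma>. \<Sum>t. ennreal (e t + signs \<sigma> t * f t)"
    and "E \<equiv> (\<Sum>t. e t) + f 0" and "H \<equiv> \<Sum>t. \<bar>f (Suc t)\<bar>"
  shows "(SUP \<sigma>\<in>{\<sigma>. switching_signal 2 \<sigma>}. V \<sigma>) = ennreal (E + H)"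
    and "(INF \<sigma>\<in>{\<sigma>. switching_signal 2 \<sigma>}. V \<sigma>) = ennreal (E - H)"
    and "0 \<le> E - H"
proof -
  have summable_f: "summable (\<lambda>t. \<bar>f (Suc t)\<bar>)"
  proof -
    have "summable (\<lambda>t. \<bar>f t\<bar>)"
      by (rule summable_comparison_test[OF _ assms(1)]) (simp add: assms(2))
    then show ?thesis
      by (subst summable_Suc_iff)
  qed
  have V: "V \<sigma> = ennreal (E + (\<Sum>t. signs \<sigma> (Suc t) * f (Suc t)))" for \<sigma>
    unfolding V_def E_def by (subst signed_series[OF assms(1,2)]) (simp_all add: add.assoc)
  have bound: "\<bar>\<Sum>t. signs \<sigma> (Suc t) * f (Suc t)\<bar> \<le> H" for \<sigma>
    using summable_rabs[of "\<lambda>t. signs \<sigma> (Suc t) * f (Suc t)"] summable_f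
    by (simp add: abs_mult H_def)
  have attained: "\<exists>\<sigma>. switching_signal 2 \<sigma> \<and> (\<Sum>t. signs \<sigma> (Suc t) * f (Suc t)) = \<epsilon> * H"
    if "\<epsilon> = 1 \<or> \<epsilon> = -1" for \<epsilon>
    using signed_tail_attained[OF summable_f that] unfolding H_def by blast
  show "0 \<le> E - H"
    using suminf_abs_tail_le[OF assms(1,2)] by (simp add: E_def H_def)
  show "(SUP \<sigma>\<in>{\<sigma>. switching_signal 2 \<sigma>}. V \<sigma>) = ennreal (E + H)"
  proof (rule antisym)
    show "(SUP \<sigma>\<in>{\<sigma>. switching_signal 2 \<sigma>}. V \<sigma>) \<le> ennreal (E + H)"
    proof (rule SUP_least)
      show "V \<sigma> \<le> ennreal (E + H)" for \<sigma>
        unfolding V using bound[of \<sigma>] by (intro ennreal_leI) (simp add: abs_le_iff)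
    qed
    obtain \<sigma> where "switching_signal 2 \<sigma>" "(\<Sum>t. signs \<sigma> (Suc t) * f (Suc t)) = H"
      using attained[of 1] by auto
    then show "ennreal (E + H) \<le> (SUP \<sigma>\<in>{\<sigma>. switching_signal 2 \<sigma>}. V \<sigma>)"
      by (intro SUP_upper2[of \<sigma>]) (simp_all add: V)
  qed
  show "(INF \<sigma>\<in>{\<sigma>. switching_signal 2 \<sigma>}. V \<sigma>) = ennreal (E - H)"
  proof (rule antisym)
    obtain \<sigma> where "switching_signal 2 \<sigma>" "(\<Sum>t. signs \<sigma> (Suc t) * f (Suc t)) = - H"
      using attained[of "-1"] by auto
    then show "(INF \<sigma>\<in>{\<sigma>. switching_signal 2 \<sigma>}. V \<sigma>) \<le> ennreal (E - H)"
      by (intro INF_lower2[of \<sigma>]) (simp_all add: V)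
    show "ennreal (E - H) \<le> (INF \<sigma>\<in>{\<sigma>. switching_signal 2 \<sigma>}. V \<sigma>)"
    proof (rule INF_greatest)
      show "ennreal (E - H) \<le> V \<sigma>" for \<sigma>
        unfolding V using bound[of \<sigma>] by (intro ennreal_leI) (simp add: abs_le_iff)
    qed
  qed
qed

definition even_series :: "complex \<Rightarrow> real" where
  "even_series z = (\<Sum>t. cost_even (spiral ^ t * z)) + cost_odd z"

definition kink_series :: "complex \<Rightarrow> real" where
  "kink_series z = (\<Sum>t. \<bar>cost_odd (spiral ^ Suc t * z)\<bar>)"

lemma orbit_signed_series_extremes:
  defines "V \<equiv> \<lambda>z \<sigma>. \<Sum>t. ennreal (cost_even (spiral ^ t * z) + signs \<sigma> t * cost_odd (spiral ^ t * z))"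
  shows "(SUP \<sigma>\<in>{\<sigma>. switching_signal 2 \<sigma>}. V z \<sigma>) = ennreal (even_series z + kink_series z)"
    and "(INF \<sigma>\<in>{\<sigma>. switching_signal 2 \<sigma>}. V z \<sigma>) = ennreal (even_series z - kink_series z)"
    and "kink_series z \<le> even_series z"
  using signed_series_extremes[where e = "\<lambda>t. cost_even (spiral ^ t * z)"
      and f = "\<lambda>t. cost_odd (spiral ^ t * z)", OF summable_cost_even_orbit abs_cost_odd_le]
  by (simp_all add: V_def even_series_def kink_series_def)

lemma kink_series_nonneg: "0 \<le> kink_series z"
  unfolding kink_series_def
  by (intro suminf_nonneg summable_abs_cost_odd_orbit) simp

lemma
  fixes a b :: "'n::finite"
  assumes "a \<noteq> b"
  shows Jworst_modes: "Jworst 2 (modes a b) (plane_cost a b) x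
      = ennreal (even_series (to_plane a b x) + kink_series (to_plane a b x))"
    and Jopt_modes: "Jopt 2 (modes a b) (plane_cost a b) x
      = ennreal (even_series (to_plane a b x) - kink_series (to_plane a b x))"
  using orbit_signed_series_extremes(1,2)
  by (simp_all add: Jworst_def Jopt_def cost_modes[OF assms])

section \<open>Second differences\<close>

definition second_diff :: "('a::real_normed_vector \<Rightarrow> real) \<Rightarrow> 'a \<Rightarrow> 'a \<Rightarrow> real \<Rightarrow> real" where
  "second_diff g z w h = g (z + h *\<^sub>R w) + g (z - h *\<^sub>R w) - 2 * g z"

lemma second_diff_tendsto_0:
  fixes g :: "'a::real_normed_vector \<Rightarrow> real"
  assumes "g differentiable at z"
  shows "((\<lambda>h. \<bar>second_diff g z w h\<bar> / \<bar>h\<bar>) \<longlongrightarrow> 0) (at 0)"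
proof -
  obtain D where D: "(g has_derivative D) (at z)"
    using assms by (auto simp: differentiable_def)
  have "((\<lambda>h. g (z + h *\<^sub>R w) + g (z - h *\<^sub>R w)) has_derivative (\<lambda>h. D (h *\<^sub>R w) + D (- (h *\<^sub>R w)))) (at 0)"
  proof (rule has_derivative_add)
    have plus: "((\<lambda>h. z + h *\<^sub>R w) has_derivative (\<lambda>h. h *\<^sub>R w)) (at 0)"
      by (auto intro!: derivative_eq_intros)
    show "((\<lambda>h. g (z + h *\<^sub>R w)) has_derivative (\<lambda>h. D (h *\<^sub>R w))) (at 0)"
      by (rule has_derivative_compose[OF plus]) (simp add: D)
    have minus: "((\<lambda>h. z - h *\<^sub>R w) has_derivative (\<lambda>h. - (h *\<^sub>R w))) (at 0)"
      by (auto intro!: derivative_eq_intros)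
    show "((\<lambda>h. g (z - h *\<^sub>R w)) has_derivative (\<lambda>h. D (- (h *\<^sub>R w)))) (at 0)"
      by (rule has_derivative_compose[OF minus]) (simp add: D)
  qed
  moreover have "D (h *\<^sub>R w) + D (- (h *\<^sub>R w)) = 0" for h
    using linear_neg[OF has_derivative_linear[OF D]] by simp
  ultimately have "((\<lambda>h. g (z + h *\<^sub>R w) + g (z - h *\<^sub>R w)) has_derivative (\<lambda>h. 0)) (at 0)"
    by simp
  then show ?thesis
    by (simp add: has_derivative_at second_diff_def)
qed

lemma not_differentiable_if_second_diff_ge:
  fixes g :: "'a::real_normed_vector \<Rightarrow> real"
  assumes "\<kappa> > 0" and "\<And>h. \<bar>h\<bar> \<le> 1 \<Longrightarrow> \<kappa> * \<bar>h\<bar> - K * h\<^sup>2 \<le> \<bar>second_diff g z w h\<bar>"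
  shows "\<not> g differentiable at z"
proof
  assume "g differentiable at z"
  define \<delta> where "\<delta> = min 1 (\<kappa> / (2 * (\<bar>K\<bar> + 1)))"
  have "\<delta> > 0"
    using assms(1) by (simp add: \<delta>_def)
  have "\<forall>\<^sub>F h in at 0. \<bar>second_diff g z w h\<bar> / \<bar>h\<bar> < \<kappa> / 2"
    by (rule order_tendstoD(2)[OF second_diff_tendsto_0[OF \<open>g differentiable at z\<close>]])
      (use assms(1) in simp)
  moreover have "\<forall>\<^sub>F h in at (0::real). h \<noteq> 0 \<and> \<bar>h\<bar> < \<delta>"
    using \<open>\<delta> > 0\<close> by (auto simp: eventually_at intro!: exI[of _ \<delta>])
  ultimately obtain h where h: "\<bar>second_diff g z w h\<bar> / \<bar>h\<bar> < \<kappa> / 2" "h \<noteq> 0" "\<bar>h\<bar> < \<delta>"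
    using eventually_happens[OF eventually_conj] by fastforce
  have Kh: "\<bar>K\<bar> * \<bar>h\<bar> \<le> \<kappa> / 2"
  proof -
    have "\<bar>K\<bar> * \<bar>h\<bar> \<le> (\<bar>K\<bar> + 1) * (\<kappa> / (2 * (\<bar>K\<bar> + 1)))"
      using h(3) by (intro mult_mono) (auto simp: \<delta>_def)
    also have "\<dots> = \<kappa> / 2"
      by (simp add: field_simps add_pos_nonneg)
    finally show ?thesis .
  qed
  have "K * h\<^sup>2 \<le> \<bar>K\<bar> * \<bar>h\<bar> * \<bar>h\<bar>"
    by (simp add: power2_eq_square mult.assoc mult_right_mono)
  also have "\<dots> \<le> \<kappa> / 2 * \<bar>h\<bar>"
    by (rule mult_right_mono[OF Kh]) simp
  moreover have "\<kappa> * \<bar>h\<bar> - K * h\<^sup>2 \<le> \<bar>second_diff g z w h\<bar>"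
    using assms(2) h(3) by (simp add: \<delta>_def)
  moreover have "\<bar>second_diff g z w h\<bar> < \<kappa> / 2 * \<bar>h\<bar>"
    using h(1,2) by (simp add: divide_less_eq)
  ultimately show False
    by linarith
qed

lemma second_diff_add:
  "second_diff (\<lambda>y. f y + g y) z w h = second_diff f z w h + second_diff g z w h"
  by (simp add: second_diff_def)

lemma second_diff_cmult:
  "second_diff (\<lambda>y. c * f y) z w h = c * second_diff f z w h"
  by (simp add: second_diff_def algebra_simps)

lemma second_diff_abs_ge: "- \<bar>second_diff g z w h\<bar> \<le> second_diff (\<lambda>y. \<bar>g y\<bar>) z w h"
  unfolding second_diff_def by linarith

lemma second_diff_mult_left:
  fixes c :: "'a::real_normed_algebra"
  shows "second_diff (\<lambda>y. g (c * y)) z w h = second_diff g (c * z) (c * w) h"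
  by (simp add: second_diff_def algebra_simps)

lemma second_diff_suminf:
  fixes g :: "nat \<Rightarrow> 'a::real_normed_vector \<Rightarrow> real"
  assumes "\<And>y. summable (\<lambda>t. g t y)"
  shows "summable (\<lambda>t. second_diff (g t) z w h)"
    and "second_diff (\<lambda>y. \<Sum>t. g t y) z w h = (\<Sum>t. second_diff (g t) z w h)"
proof -
  have sum: "summable (\<lambda>t. g t (z + h *\<^sub>R w) + g t (z - h *\<^sub>R w))"
    and twice: "summable (\<lambda>t. 2 * g t z)"
    using assms by (simp_all add: summable_add summable_mult)
  then show "summable (\<lambda>t. second_diff (g t) z w h)"
    unfolding second_diff_def by (rule summable_diff)
  show "second_diff (\<lambda>y. \<Sum>t. g t y) z w h = (\<Sum>t. second_diff (g t) z w h)"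
    unfolding second_diff_def
    by (simp add: suminf_diff[OF sum twice, symmetric] suminf_mult[OF assms] suminf_add[OF assms assms])
qed

lemma second_diff_cost_even:
  "second_diff cost_even z w h
     = 2 * h\<^sup>2 * (Re w)\<^sup>2 + 12 * h\<^sup>2 * (Im z)\<^sup>2 * (Im w)\<^sup>2 + 2 * h ^ 4 * (Im w) ^ 4"
  by (simp add: second_diff_def cost_even_def power2_eq_square power4_eq_xxxx algebra_simps)

lemma second_diff_cost_odd:
  "second_diff cost_odd z w h = 4 * h\<^sup>2 * (Re z * (Im w)\<^sup>2 + 2 * Re w * Im z * Im w)"
  by (simp add: second_diff_def cost_odd_def power2_eq_square algebra_simps)

lemma abs_second_diff_cost_even_le:
  assumes "\<bar>h\<bar> \<le> 1"
  shows "\<bar>second_diff cost_even z w h\<bar>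
     \<le> h\<^sup>2 * (2 * (cmod w)\<^sup>2 + 12 * (cmod z)\<^sup>2 * (cmod w)\<^sup>2 + 2 * cmod w ^ 4)"
proof -
  have Re_w: "(Re w)\<^sup>2 \<le> (cmod w)\<^sup>2" and Im_w: "(Im w)\<^sup>2 \<le> (cmod w)\<^sup>2" and Im_z: "(Im z)\<^sup>2 \<le> (cmod z)\<^sup>2"
    by (simp_all add: abs_Re_le_cmod abs_Im_le_cmod power2_le_iff_abs_le)
  have "(Im z)\<^sup>2 * (Im w)\<^sup>2 \<le> (cmod z)\<^sup>2 * (cmod w)\<^sup>2"
    using Im_z Im_w by (rule mult_mono) simp_all
  moreover have "h\<^sup>2 * (Im w) ^ 4 \<le> 1 * cmod w ^ 4"
    using assms Im_w power_mono[OF Im_w, of 2]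
    by (intro mult_mono) (simp_all add: abs_square_le_1 flip: power_mult)
  ultimately have "2 * (Re w)\<^sup>2 + 12 * (Im z)\<^sup>2 * (Im w)\<^sup>2 + 2 * h\<^sup>2 * (Im w) ^ 4
      \<le> 2 * (cmod w)\<^sup>2 + 12 * (cmod z)\<^sup>2 * (cmod w)\<^sup>2 + 2 * cmod w ^ 4"
    using Re_w by linarith
  moreover have "second_diff cost_even z w h
      = h\<^sup>2 * (2 * (Re w)\<^sup>2 + 12 * (Im z)\<^sup>2 * (Im w)\<^sup>2 + 2 * h\<^sup>2 * (Im w) ^ 4)"
    by (simp add: second_diff_cost_even algebra_simps power4_eq_xxxx power2_eq_square)
  ultimately show ?thesis
    by (simp add: abs_mult mult_left_mono)
qed

lemma abs_second_diff_cost_odd_le: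
  "\<bar>second_diff cost_odd z w h\<bar> \<le> 12 * h\<^sup>2 * cmod z * (cmod w)\<^sup>2"
proof -
  have "\<bar>Re z * (Im w)\<^sup>2\<bar> \<le> cmod z * (cmod w)\<^sup>2"
    unfolding abs_mult
    by (intro mult_mono) (simp_all add: abs_Re_le_cmod abs_Im_le_cmod power2_le_iff_abs_le)
  moreover have "\<bar>Re w * Im z * Im w\<bar> \<le> cmod w * cmod z * cmod w"
    unfolding abs_mult by (intro mult_mono) (simp_all add: abs_Re_le_cmod abs_Im_le_cmod)
  ultimately have "\<bar>Re z * (Im w)\<^sup>2 + 2 * Re w * Im z * Im w\<bar> \<le> 3 * (cmod z * (cmod w)\<^sup>2)"
    using abs_triangle_ineq[of "Re z * (Im w)\<^sup>2" "2 * (Re w * Im z * Im w)"]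
    by (simp add: abs_mult power2_eq_square mult.assoc mult.left_commute)
  from mult_left_mono[OF this, of "4 * h\<^sup>2"] show ?thesis
    by (simp add: second_diff_cost_odd abs_mult)
qed

lemma second_diff_abs_cost_odd_kink:
  assumes "Re z = 0" and "Im w = 0"
  shows "second_diff (\<lambda>y. \<bar>cost_odd y\<bar>) z w h = 4 * \<bar>h\<bar> * \<bar>Re w\<bar> * (Im z)\<^sup>2"
  using assms by (simp add: second_diff_def cost_odd_def abs_mult)

lemma abs_suminf_le_geometric:
  fixes f :: "nat \<Rightarrow> real"
  assumes "\<And>t. \<bar>f t\<bar> \<le> C * r ^ t" and "0 \<le> r" and "r < 1"
  shows "\<bar>\<Sum>t. f t\<bar> \<le> C / (1 - r)"
proof -
  have geometric: "(\<lambda>t. C * r ^ t) sums (C / (1 - r))"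
    using sums_mult[OF geometric_sums[of r], of C] assms(2,3) by simp
  have "summable (\<lambda>t. \<bar>f t\<bar>)"
    by (rule summable_comparison_test[OF _ sums_summable[OF geometric]]) (simp add: assms(1))
  then have "\<bar>\<Sum>t. f t\<bar> \<le> (\<Sum>t. \<bar>f t\<bar>)"
    by (rule summable_rabs)
  also have "\<dots> \<le> C / (1 - r)"
    using \<open>summable (\<lambda>t. \<bar>f t\<bar>)\<close> geometric assms(1) by (intro sums_le[OF _ summable_sums]) auto
  finally show ?thesis .
qed

lemma abs_second_diff_cost_even_orbit_le:
  assumes "\<bar>h\<bar> \<le> 1"
  shows "\<bar>second_diff cost_even (spiral ^ t * z) (spiral ^ t * w) h\<bar>
     \<le> h\<^sup>2 * (2 * (cmod w)\<^sup>2 + 12 * (cmod z)\<^sup>2 * (cmod w)\<^sup>2 + 2 * cmod w ^ 4) * (1/2) ^ t"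
proof -
  let ?y = "spiral ^ t * z" and ?v = "spiral ^ t * w"
  have v2: "(cmod ?v)\<^sup>2 \<le> (cmod w)\<^sup>2 * (1/2) ^ t" and v4: "cmod ?v ^ 4 \<le> cmod w ^ 4 * (1/2) ^ t"
    using cmod_spiral_orbit_power_le[of t w 1] cmod_spiral_orbit_power_le[of t w 3]
    by (simp_all add: numeral_eq_Suc)
  have y2: "(cmod ?y)\<^sup>2 \<le> (cmod z)\<^sup>2"
    by (rule power_mono[OF cmod_spiral_orbit_le]) simp
  have "(cmod ?y)\<^sup>2 * (cmod ?v)\<^sup>2 \<le> (cmod z)\<^sup>2 * ((cmod w)\<^sup>2 * (1/2) ^ t)"
    using y2 v2 by (rule mult_mono) simp_all
  then have "2 * (cmod ?v)\<^sup>2 + 12 * (cmod ?y)\<^sup>2 * (cmod ?v)\<^sup>2 + 2 * cmod ?v ^ 4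
      \<le> (2 * (cmod w)\<^sup>2 + 12 * (cmod z)\<^sup>2 * (cmod w)\<^sup>2 + 2 * cmod w ^ 4) * (1/2) ^ t"
    using v2 v4 by (simp add: algebra_simps)
  from mult_left_mono[OF this, of "h\<^sup>2"] show ?thesis
    using abs_second_diff_cost_even_le[OF assms, of ?y ?v] by (simp add: mult.assoc)
qed

lemma abs_second_diff_cost_odd_orbit_le:
  "\<bar>second_diff cost_odd (spiral ^ Suc t * z) (spiral ^ Suc t * w) h\<bar>
     \<le> 12 * h\<^sup>2 * cmod z * (cmod w)\<^sup>2 * (1/2) ^ t"
proof -
  have "(cmod (spiral ^ Suc t * w))\<^sup>2 \<le> (cmod w)\<^sup>2 * (1/2) ^ Suc t"
    using cmod_spiral_orbit_power_le[of "Suc t" w 1] by (simp add: numeral_eq_Suc)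
  also have "\<dots> \<le> (cmod w)\<^sup>2 * (1/2) ^ t"
    by (rule mult_left_mono) simp_all
  finally have w2: "(cmod (spiral ^ Suc t * w))\<^sup>2 \<le> (cmod w)\<^sup>2 * (1/2) ^ t" .
  have "cmod (spiral ^ Suc t * z) * (cmod (spiral ^ Suc t * w))\<^sup>2 \<le> cmod z * ((cmod w)\<^sup>2 * (1/2) ^ t)"
    using cmod_spiral_orbit_le[of "Suc t" z] w2 by (rule mult_mono) simp_all
  from mult_left_mono[OF this, of "12 * h\<^sup>2"] show ?thesis
    using abs_second_diff_cost_odd_le[of "spiral ^ Suc t * z" "spiral ^ Suc t * w" h]
    by (simp add: algebra_simps)
qed

lemma even_series_second_diff_le:
  "\<exists>K. \<forall>h. \<bar>h\<bar> \<le> 1 \<longrightarrow> \<bar>second_diff even_series z w h\<bar> \<le> K * h\<^sup>2"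
proof (intro exI allI impI)
  define B where "B = 2 * (cmod w)\<^sup>2 + 12 * (cmod z)\<^sup>2 * (cmod w)\<^sup>2 + 2 * cmod w ^ 4"
  fix h :: real
  assume "\<bar>h\<bar> \<le> 1"
  then have "\<bar>\<Sum>t. second_diff cost_even (spiral ^ t * z) (spiral ^ t * w) h\<bar> \<le> h\<^sup>2 * B / (1 - 1/2)"
    by (intro abs_suminf_le_geometric abs_second_diff_cost_even_orbit_le[where z = z and w = w, folded B_def]) simp_all
  moreover have "second_diff even_series z w h
      = (\<Sum>t. second_diff cost_even (spiral ^ t * z) (spiral ^ t * w) h) + second_diff cost_odd z w h"
    unfolding even_series_def second_diff_add second_diff_suminf(2)[OF summable_cost_even_orbit]
    by (simp add: second_diff_mult_left)
  ultimately show "\<bar>second_diff even_series z w h\<bar> \<le> (2 * B + 12 * cmod z * (cmod w)\<^sup>2) * h\<^sup>2"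
    using abs_second_diff_cost_odd_le[of z w h] by (simp add: algebra_simps)
qed

lemma second_diff_kink_series_sums:
  "(\<lambda>t. second_diff (\<lambda>y. \<bar>cost_odd y\<bar>) (spiral ^ Suc t * z) (spiral ^ Suc t * w) h)
     sums second_diff kink_series z w h"
proof -
  note series = second_diff_suminf[where g = "\<lambda>t y. \<bar>cost_odd (spiral ^ Suc t * y)\<bar>",
      OF summable_abs_cost_odd_orbit]
  have shift: "second_diff (\<lambda>y. \<bar>cost_odd (spiral ^ Suc t * y)\<bar>) z w h
      = second_diff (\<lambda>y. \<bar>cost_odd y\<bar>) (spiral ^ Suc t * z) (spiral ^ Suc t * w) h" for t
    by (rule second_diff_mult_left)
  show ?thesis
    using summable_sums[OF series(1)[of z w h]] unfolding kink_series_def series(2) shift .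
qed

lemma kink_series_second_diff_ge:
  assumes "Re (spiral ^ Suc k * z) = 0" and "Im (spiral ^ Suc k * z) \<noteq> 0"
  shows "\<exists>\<kappa>>0. \<exists>K. \<forall>h. \<kappa> * \<bar>h\<bar> - K * h\<^sup>2 \<le> second_diff kink_series z (cnj (spiral ^ Suc k)) h"
proof -
  define w where "w = cnj (spiral ^ Suc k)"
  define C where "C = 12 * cmod z * (cmod w)\<^sup>2"
  have "spiral ^ Suc k * w = of_real ((cmod (spiral ^ Suc k))\<^sup>2)"
    unfolding w_def by (rule complex_norm_square[symmetric])
  then have kink_dir: "Im (spiral ^ Suc k * w) = 0" "Re (spiral ^ Suc k * w) > 0"
    by (simp_all add: norm_power cmod_spiral)
  define \<kappa> where "\<kappa> = 4 * Re (spiral ^ Suc k * w) * (Im (spiral ^ Suc k * z))\<^sup>2"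
  have "\<kappa> > 0"
    using kink_dir(2) assms(2) by (simp add: \<kappa>_def)
  moreover have "\<kappa> * \<bar>h\<bar> - 2 * C * h\<^sup>2 \<le> second_diff kink_series z w h" for h
  proof -
    let ?T = "\<lambda>t. second_diff (\<lambda>y. \<bar>cost_odd y\<bar>) (spiral ^ Suc t * z) (spiral ^ Suc t * w) h"
    have T: "(if t = k then \<kappa> * \<bar>h\<bar> else 0) - h\<^sup>2 * C * (1/2) ^ t \<le> ?T t" for t
    proof (cases "t = k")
      case True
      have "?T k = \<kappa> * \<bar>h\<bar>"
        unfolding second_diff_abs_cost_odd_kink[OF assms(1) kink_dir(1)] \<kappa>_def
          abs_of_pos[OF kink_dir(2)] by (simp only: ac_simps)
      moreover have "0 \<le> h\<^sup>2 * C * (1/2) ^ t"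
        by (simp add: C_def)
      ultimately show ?thesis
        using True by simp
    next
      case False
      then show ?thesis
        using second_diff_abs_ge[of cost_odd "spiral ^ Suc t * z" "spiral ^ Suc t * w" h]
          abs_second_diff_cost_odd_orbit_le[of t z w h]
        by (simp add: C_def algebra_simps)
    qed
    have "(\<lambda>t. (if t = k then \<kappa> * \<bar>h\<bar> else 0) - h\<^sup>2 * C * (1/2) ^ t) sums (\<kappa> * \<bar>h\<bar> - h\<^sup>2 * C * 2)"
      using sums_diff[OF sums_single[of k "\<lambda>_. \<kappa> * \<bar>h\<bar>"] sums_mult[OF geometric_sums[of "1/2::real"]]]
      by simp
    moreover have "?T sums second_diff kink_series z w h"
      by (rule second_diff_kink_series_sums)
    ultimately have "\<kappa> * \<bar>h\<bar> - h\<^sup>2 * C * 2 \<le> second_diff kink_series z w h"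
      by (rule sums_le[OF T])
    then show ?thesis
      by (simp add: algebra_simps)
  qed
  ultimately show ?thesis
    unfolding w_def by blast
qed

text \<open>Time \<open>0\<close> is excluded: the initial sign is fixed, so there \<open>cost_odd\<close> enters without absolute value.\<close>

definition orbit_hits_imaginary_axis :: "complex \<Rightarrow> bool" where
  "orbit_hits_imaginary_axis z \<longleftrightarrow> (\<exists>k. Re (spiral ^ Suc k * z) = 0 \<and> Im (spiral ^ Suc k * z) \<noteq> 0)"

lemma second_diff_to_plane:
  assumes "a \<noteq> b"
  shows "second_diff (\<lambda>y. F (to_plane a b y)) x (from_plane a b w) h = second_diff F (to_plane a b x) w h"
  by (simp add: second_diff_def to_plane_add to_plane_diff to_plane_scaleR to_plane_from_plane[OF assms])

lemma even_kink_combination_not_differentiable: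
  fixes a b :: "'n::finite"
  assumes "a \<noteq> b" and "\<bar>s\<bar> = 1" and "orbit_hits_imaginary_axis (to_plane a b x)"
  shows "\<not> (\<lambda>y. even_series (to_plane a b y) + s * kink_series (to_plane a b y)) differentiable at x"
proof -
  let ?z = "to_plane a b x"
  obtain k where k: "Re (spiral ^ Suc k * ?z) = 0" "Im (spiral ^ Suc k * ?z) \<noteq> 0"
    using assms(3) by (auto simp: orbit_hits_imaginary_axis_def)
  define w where "w = cnj (spiral ^ Suc k)"
  obtain \<kappa> K where "\<kappa> > 0" and kink: "\<And>h. \<kappa> * \<bar>h\<bar> - K * h\<^sup>2 \<le> second_diff kink_series ?z w h"
    using kink_series_second_diff_ge[OF k] unfolding w_def by blast
  obtain K' where even: "\<And>h. \<bar>h\<bar> \<le> 1 \<Longrightarrow> \<bar>second_diff even_series ?z w h\<bar> \<le> K' * h\<^sup>2"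
    using even_series_second_diff_le by blast
  show ?thesis
  proof (rule not_differentiable_if_second_diff_ge[where w = "from_plane a b w" and K = "K + K'"])
    show "\<kappa> > 0" by fact
    fix h :: real
    assume "\<bar>h\<bar> \<le> 1"
    have "second_diff (\<lambda>y. even_series (to_plane a b y) + s * kink_series (to_plane a b y)) x (from_plane a b w) h
        = second_diff even_series ?z w h + s * second_diff kink_series ?z w h"
      by (simp add: second_diff_to_plane[OF assms(1)] second_diff_add second_diff_cmult)
    moreover have "\<bar>s * second_diff kink_series ?z w h\<bar> = \<bar>second_diff kink_series ?z w h\<bar>"
      by (simp add: abs_mult assms(2))
    ultimately show "\<kappa> * \<bar>h\<bar> - (K + K') * h\<^sup>2
        \<le> \<bar>second_diff (\<lambda>y. even_series (to_plane a b y) + s * kink_series (to_plane a b y)) x (from_plane a b w) h\<bar>"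
      using kink[of h] even[OF \<open>\<bar>h\<bar> \<le> 1\<close>] by (simp add: algebra_simps)
  qed
qed

section \<open>Density of the kinks\<close>

lemma norm_cis_minus_1_le: "cmod (cis x - 1) \<le> \<bar>x\<bar>"
  using abs_sin_x_le_abs_x[of "x / 2"] by (simp add: cis_conv_exp dist_exp_i_1)

lemma dense_powers_on_unit_circle:
  fixes \<omega> u :: complex
  assumes "cmod \<omega> = 1" and "\<And>n. n > 0 \<Longrightarrow> \<omega> ^ n \<noteq> 1" and "cmod u = 1" and "\<epsilon> > 0"
  obtains n where "n > 0" and "cmod (\<omega> ^ n - u) < \<epsilon>"
proof -
  define \<theta> where "\<theta> = Arg \<omega>"
  define \<phi> where "\<phi> = Arg u"
  have \<omega>: "\<omega> = cis \<theta>" and u: "u = cis \<phi>"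
  proof -
    have "\<omega> \<noteq> 0" "u \<noteq> 0"
      using assms(1,3) by auto
    then show "\<omega> = cis \<theta>" "u = cis \<phi>"
      using cis_Arg[of \<omega>] cis_Arg[of u] assms(1,3) by (simp_all add: \<theta>_def \<phi>_def sgn_div_norm)
  qed
  have irrational: "\<theta> / (2 * pi) \<notin> \<rat>"
  proof
    assume "\<theta> / (2 * pi) \<in> \<rat>"
    then obtain p q :: int where "q > 0" and "\<theta> / (2 * pi) = of_int p / of_int q"
      by (rule Rats_cases') blast
    then have "real (nat q) * \<theta> = 2 * pi * of_int p"
      by (simp add: field_simps)
    then have "\<omega> ^ nat q = 1"
      by (simp add: \<omega> Complex.DeMoivre)
    with assms(2)[of "nat q"] \<open>q > 0\<close> show False
      by simp
  qed
  obtain h k :: int where "k > 0" and hk: "\<bar>of_int k * (\<theta> / (2 * pi)) - of_int h - \<phi> / (2 * pi)\<bar> < \<epsilon> / (2 * pi)"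
    by (rule sequence_of_fractional_parts_is_dense[OF irrational, of "\<epsilon> / (2 * pi)" "\<phi> / (2 * pi)"])
      (use assms(4) in auto)
  define r where "r = of_int k * (\<theta> / (2 * pi)) - of_int h - \<phi> / (2 * pi)"
  have "\<bar>2 * pi * r\<bar> < \<epsilon>"
    using hk by (simp add: r_def abs_mult less_divide_eq mult.commute)
  have "real (nat k) * \<theta> = (\<phi> + 2 * pi * r) + 2 * pi * of_int h"
    using \<open>k > 0\<close> by (simp add: r_def field_simps)
  then have "\<omega> ^ nat k = cis (\<phi> + 2 * pi * r) * cis (2 * pi * of_int h)"
    by (simp only: \<omega> Complex.DeMoivre cis_mult)
  then have "\<omega> ^ nat k - u = cis \<phi> * (cis (2 * pi * r) - 1)"
    by (simp add: u cis_mult right_diff_distrib)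
  then have "cmod (\<omega> ^ nat k - u) \<le> \<bar>2 * pi * r\<bar>"
    by (simp add: norm_mult norm_cis_minus_1_le)
  then show ?thesis
    using that[of "nat k"] \<open>k > 0\<close> \<open>\<bar>2 * pi * r\<bar> < \<epsilon>\<close> by simp
qed

lemma power_3_4i_mod_5:
  assumes "n > 0"
  shows "\<exists>u v :: int. Complex 3 4 ^ n = Complex (of_int (5 * u + 3)) (of_int (5 * v + 4))"
  using assms
proof (induction n rule: nat_induct_non_zero)
  case 1
  show ?case
    by (rule exI[of _ 0], rule exI[of _ 0]) simp
next
  case (Suc n)
  then obtain u v :: int where "Complex 3 4 ^ n = Complex (of_int (5 * u + 3)) (of_int (5 * v + 4))"
    by blast
  then have "Complex 3 4 ^ Suc n
      = Complex (of_int (5 * (3 * u - 4 * v - 2) + 3)) (of_int (5 * (4 * u + 3 * v + 4) + 4))"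
    by (simp add: complex_eq_iff algebra_simps)
  then show ?case
    by blast
qed

lemma rotation_3_4_power_neq_1:
  assumes "n > 0"
  shows "Complex (3/5) (4/5) ^ n \<noteq> 1"
proof
  assume "Complex (3/5) (4/5) ^ n = 1"
  moreover have "Complex 3 4 = 5 * Complex (3/5) (4/5)"
    by (simp add: complex_eq_iff)
  ultimately have "Complex 3 4 ^ n = 5 ^ n"
    by (simp add: power_mult_distrib)
  moreover obtain u v :: int where "Complex 3 4 ^ n = Complex (of_int (5 * u + 3)) (of_int (5 * v + 4))"
    using power_3_4i_mod_5[OF assms] by blast
  ultimately have "real_of_int (5 * u + 3) = real_of_int (5 ^ n)"
    by (metis Re_complex_of_real complex.sel(1) of_int_numeral of_int_power of_real_numeral of_real_power)
  then have "5 * u + 3 = 5 * 5 ^ (n - 1)"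
    using assms by (simp only: of_int_eq_iff) (simp add: power_eq_if)
  then show False
    by presburger
qed

lemma orbit_hits_imaginary_axis_divide_power:
  assumes "n > 0" and "c \<noteq> 0"
  shows "orbit_hits_imaginary_axis (\<i> * of_real c / (2 * spiral) ^ n)"
proof -
  have "spiral ^ n * (\<i> * of_real c / (2 * spiral) ^ n) = \<i> * of_real (c / 2 ^ n)"
    by (simp add: power_mult_distrib)
  then show ?thesis
    using assms unfolding orbit_hits_imaginary_axis_def by (intro exI[of _ "n - 1"]) simp
qed

lemma orbit_hits_imaginary_axis_near:
  assumes "z \<noteq> 0" and "\<epsilon> > 0"
  obtains z' where "orbit_hits_imaginary_axis z'" and "cmod (z' - z) < \<epsilon>"
proof -
  define \<omega> where "\<omega> = 2 * spiral"
  define s where "s = sgn z"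
  define u where "u = \<i> * cnj s"
  have "cmod s = 1"
    using assms(1) by (simp add: s_def norm_sgn)
  then have "s * cnj s = 1"
    using complex_norm_square[of s] by simp
  then have "s * u = \<i>"
    by (simp add: u_def mult.left_commute)
  have "\<omega> = Complex (3/5) (4/5)"
    by (simp add: \<omega>_def spiral_def complex_eq_iff)
  moreover have "cmod \<omega> = 1"
    by (simp add: \<omega>_def norm_mult cmod_spiral)
  moreover have "cmod u = 1"
    using \<open>cmod s = 1\<close> by (simp add: u_def norm_mult)
  ultimately obtain n where "n > 0" and n: "cmod (\<omega> ^ n - u) < \<epsilon> / cmod z"
    using dense_powers_on_unit_circle[of \<omega> u "\<epsilon> / cmod z"] rotation_3_4_power_neq_1 assms by auto
  define z' where "z' = \<i> * of_real (cmod z) / \<omega> ^ n"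
  have "z' - z = of_real (cmod z) * s * (u - \<omega> ^ n) / \<omega> ^ n"
  proof -
    have z_eq: "z = of_real (cmod z) * s"
      using assms(1) by (simp add: s_def sgn_div_norm scaleR_conv_of_real)
    with \<open>s * u = \<i>\<close> have "z * u = \<i> * of_real (cmod z)"
      by (metis mult.assoc mult.commute)
    with z_eq \<open>cmod \<omega> = 1\<close> show ?thesis
      by (auto simp: z'_def right_diff_distrib diff_divide_distrib mult.assoc)
  qed
  then have "cmod (z' - z) = cmod z * cmod (u - \<omega> ^ n)"
    using \<open>cmod s = 1\<close> \<open>cmod \<omega> = 1\<close> by (simp add: norm_mult norm_divide norm_power)
  also have "\<dots> < \<epsilon>"
    using n assms by (simp add: norm_minus_commute pos_less_divide_eq mult.commute)
  finally show ?thesis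
    using that orbit_hits_imaginary_axis_divide_power[OF \<open>n > 0\<close>, of "cmod z"] assms(1)
    by (simp add: z'_def \<omega>_def)
qed

lemma orbit_hits_imaginary_axis_dense:
  assumes "\<epsilon> > 0"
  obtains z' where "orbit_hits_imaginary_axis z'" and "cmod (z' - z) < \<epsilon>"
proof -
  define z1 where "z1 = (if z = 0 then of_real (\<epsilon> / 2) else z)"
  have "z1 \<noteq> 0" and "cmod (z1 - z) \<le> \<epsilon> / 2"
    using assms by (auto simp: z1_def)
  moreover obtain z' where "orbit_hits_imaginary_axis z'" and "cmod (z' - z1) < \<epsilon> / 2"
    using orbit_hits_imaginary_axis_near[OF \<open>z1 \<noteq> 0\<close>, of "\<epsilon> / 2"] assms by auto
  moreover have "cmod (z' - z) \<le> cmod (z' - z1) + cmod (z1 - z)"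
    using norm_triangle_ineq[of "z' - z1" "z1 - z"] by simp
  ultimately show ?thesis
    using that by fastforce
qed

lemma closure_orbit_hits_imaginary_axis:
  fixes a b :: "'n::finite"
  assumes "a \<noteq> b"
  shows "closure {x. orbit_hits_imaginary_axis (to_plane a b x)} = UNIV"
proof -
  have "x \<in> closure {x. orbit_hits_imaginary_axis (to_plane a b x)}" for x
    unfolding closure_approachable
  proof (intro allI impI)
    fix \<epsilon> :: real
    assume "\<epsilon> > 0"
    then obtain z' where hits: "orbit_hits_imaginary_axis z'" and near: "cmod (z' - to_plane a b x) < \<epsilon>"
      using orbit_hits_imaginary_axis_dense by blast
    define y where "y = x + from_plane a b (z' - to_plane a b x)"
    have "to_plane a b y = z'" and "dist y x = cmod (z' - to_plane a b x)"
      by (simp_all add: y_def to_plane_add to_plane_from_plane[OF assms] dist_norm norm_from_plane[OF assms])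
    with hits near show "\<exists>y\<in>{x. orbit_hits_imaginary_axis (to_plane a b x)}. dist y x < \<epsilon>"
      by (intro bexI[of _ y]) simp_all
  qed
  then show ?thesis
    by auto
qed

lemma
  fixes a b :: "'n::finite"
  assumes "a \<noteq> b" and "orbit_hits_imaginary_axis (to_plane a b x)"
  shows Jopt_modes_not_differentiable:
      "\<not> (\<lambda>y. enn2real (Jopt 2 (modes a b) (plane_cost a b) y)) differentiable at x"
    and Jworst_modes_not_differentiable:
      "\<not> (\<lambda>y. enn2real (Jworst 2 (modes a b) (plane_cost a b) y)) differentiable at x"
proof -
  have "0 \<le> even_series z - kink_series z" "0 \<le> even_series z + kink_series z" for z
    using orbit_signed_series_extremes(3)[of z] kink_series_nonneg[of z] by linarith+
  then have "(\<lambda>y. enn2real (Jopt 2 (modes a b) (plane_cost a b) y))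
        = (\<lambda>y. even_series (to_plane a b y) + (-1) * kink_series (to_plane a b y))"
    and "(\<lambda>y. enn2real (Jworst 2 (modes a b) (plane_cost a b) y))
        = (\<lambda>y. even_series (to_plane a b y) + 1 * kink_series (to_plane a b y))"
    by (simp_all add: Jopt_modes[OF assms(1)] Jworst_modes[OF assms(1)])
  then show "\<not> (\<lambda>y. enn2real (Jopt 2 (modes a b) (plane_cost a b) y)) differentiable at x"
    and "\<not> (\<lambda>y. enn2real (Jworst 2 (modes a b) (plane_cost a b) y)) differentiable at x"
    using even_kink_combination_not_differentiable[OF assms(1) _ assms(2), where s = "-1"]
      even_kink_combination_not_differentiable[OF assms(1) _ assms(2), where s = 1]
    by simp_all
qed

theorem theorem3:
  assumes "CARD('n) \<ge> 2"
  shows "\<exists>(m::nat) (A :: nat \<Rightarrow> real^'n^'n) (c :: real^'n \<Rightarrow> real).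
     m \<ge> 1 \<and>
     (\<forall>i\<in>{1..m}. \<forall>j k. A i $ j $ k \<in> \<rat>) \<and>
     JSR m A < 1 \<and>
     (\<forall>x. c x \<ge> 0) \<and>
     smooth_fun c \<and>
     (\<exists>U L. open U \<and> 0 \<in> U \<and> L-lipschitz_on U c) \<and>
     (\<forall>x. Jopt m A c x < \<infinity> \<and> Jworst m A c x < \<infinity>) \<and>
     (\<exists>S. closure S = UNIV \<and> (\<forall>x\<in>S. \<not> ((\<lambda>y. enn2real (Jopt m A c y)) differentiable at x))) \<and>
     (\<exists>S. closure S = UNIV \<and> (\<forall>x\<in>S. \<not> ((\<lambda>y. enn2real (Jworst m A c y)) differentiable at x)))"
proof -
  obtain I :: "'n set" where "card I = 2"
    using ex_card[OF assms] by blast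
  then obtain a b :: 'n where ab: "a \<noteq> b"
    by (auto simp: card_2_iff)
  show ?thesis
  proof (intro exI[of _ 2] exI[of _ "modes a b"] exI[of _ "plane_cost a b"] conjI)
    show "\<exists>U L. open U \<and> 0 \<in> U \<and> L-lipschitz_on U (plane_cost a b)"
      using lipschitz_plane_cost[of a b] by (intro exI[of _ "ball 0 1"] exI[of _ 12]) simp
    show "\<exists>S. closure S = UNIV
        \<and> (\<forall>x\<in>S. \<not> (\<lambda>y. enn2real (Jopt 2 (modes a b) (plane_cost a b) y)) differentiable at x)"
      using closure_orbit_hits_imaginary_axis[OF ab] Jopt_modes_not_differentiable[OF ab] by blast
    show "\<exists>S. closure S = UNIV
        \<and> (\<forall>x\<in>S. \<not> (\<lambda>y. enn2real (Jworst 2 (modes a b) (plane_cost a b) y)) differentiable at x)"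
      using closure_orbit_hits_imaginary_axis[OF ab] Jworst_modes_not_differentiable[OF ab] by blast
  qed (simp_all add: modes_rational JSR_modes_less_1[OF ab] smooth_plane_cost[OF ab] plane_cost_def
      Jopt_modes[OF ab] Jworst_modes[OF ab])
qed

end
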